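(* Let $(A,B)\in M_k(\mathbb{F}_q)\times M_{k,n-k}(\mathbb{F}_q)$ and let $T\in L(W,V)$ be the linear map whose matrix with respect to $\mathcal{B}_1,\mathcal{B}_2$ is $\begin{bmatrix}A^{\mathsf T}\\ B^{\mathsf T}\end{bmatrix}\in M_{n,k}(\mathbb{F}_q)$. Then $\operatorname{rank}\mathcal{C}(A,B)=k-\dim\mathfrak{I}(T)$, i.e. the pair $(A,B)$ has a reachability subspace of dimension $k-\dim\mathfrak{I}(T)$.
   Context: Let $\mathbb{F}_q$ be the finite field with $q$ elements, $n> k$ positive integers, $V$ an $n$-dimensional $\mathbb{F}_q$-vector space and $W\subseteq V$ a $k$-dimensional subspace. Fix an ordered basis $\mathcal{B}_1=(v_1,\ldots,v_k)$ of $W$ and extend it to an ordered basis $\mathcal{B}_2=(v_1,\ldots,v_n)$ of $V$. $L(W,V)$ is the space of linear maps $W\to V$; for $T\in L(W,V)$, $\mathfrak{I}(T)$ is the largest subspace $U\subseteq W$ with $T(U)\subseteq U$. For $(A,B)\in M_k(\mathbb{F}_q)\times M_{k,n-k}(\mathbb{F}_q)$, the reachability matrix is $\mathcal{C}(A,B)=[\,B\ \ AB\ \ \cdots\ \ A^{k-1}B\,]\in M_{k,k(n-k)}(\mathbb{F}_q)$, and $(A,B)$ is said to have an $r$-dimensional reachability subspace if $\operatorname{rank}\mathcal{C}(A,B)=r$. *)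

theory Defs
  imports "Jordan_Normal_Form.DL_Rank"
begin

definition linear_on_subspace :: "('a::field \<Rightarrow> 'b::ab_group_add \<Rightarrow> 'b) \<Rightarrow> 'b set \<Rightarrow> ('b \<Rightarrow> 'b) \<Rightarrow> bool" where
  "linear_on_subspace scale W T \<longleftrightarrow>
     (\<forall>x\<in>W. \<forall>y\<in>W. T (x + y) = T x + T y) \<and> (\<forall>c. \<forall>x\<in>W. T (scale c x) = scale c (T x))"

definition largest_invariant_subspace :: "('a::field \<Rightarrow> 'b::ab_group_add \<Rightarrow> 'b) \<Rightarrow> 'b set \<Rightarrow> ('b \<Rightarrow> 'b) \<Rightarrow> 'b set" where
  "largest_invariant_subspace scale W T =
     (THE U. module.subspace scale U \<and> U \<subseteq> W \<and> T ` U \<subseteq> U \<and>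
        (\<forall>U'. module.subspace scale U' \<and> U' \<subseteq> W \<and> T ` U' \<subseteq> U' \<longrightarrow> U' \<subseteq> U))"

text \<open>Reachability matrix C(A,B) = [B, AB, ..., A^(k-1) B] for A k x k and B k x m:
  column j*m + l (j < k, l < m) is column l of A^j B.\<close>
definition reach_mat :: "'a::field mat \<Rightarrow> 'a mat \<Rightarrow> 'a mat" where
  "reach_mat A B = (let k = dim_row A; m = dim_col B in
     mat k (k * m) (\<lambda>(i, j). ((A ^\<^sub>m (j div m)) * B) $$ (i, j mod m)))"

end

theory Submission
  imports Defs "Jordan_Normal_Form.Matrix_Kernel"
begin

(* In coordinates x with respect to v_1, ..., v_k, the map T sends w \<in> W to the vector with
   W-coordinates A^T x and complementary coordinates B^T x. So T w stays in W iff B^T x = 0, and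
   the vectors whose first m iterates stay in W are those with B^T (A^T)^j x = 0 for all j < m.
   These sets form a decreasing chain of subspaces of W, which stabilises after at most dim W = k
   steps, and its stable value is the largest T-invariant subspace of W. For m = k the condition
   says exactly that x is in the kernel of C(A,B)^T, so dim I(T) = k - rank C(A,B)^T
   = k - rank C(A,B). *)

section \<open>Rank of a matrix and of its transpose\<close>

lemma (in vec_space) span_cols_eq_mult_image:
  assumes M: "M \<in> carrier_mat n p"
  shows "span (set (cols M)) = (\<lambda>x. M *\<^sub>v x) ` carrier_vec p"
proof -
  have cols: "set (cols M) \<subseteq> carrier_vec n" using M cols_dim by blast
  have "\<forall>w \<in> set (cols M). dim_vec w = n" using cols by auto
  then have lincomb: "lincomb_list c (cols M) = M *\<^sub>v vec p c" for c
    using lincomb_list_as_mat_mult[of "cols M" c] M mat_of_cols_cols[of M] by (simp add: carrier_matD)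
  have "span (set (cols M)) = range (\<lambda>c. lincomb_list c (cols M))"
    unfolding span_list_as_span[OF cols, symmetric] span_list_def by auto
  also have "\<dots> = (\<lambda>x. M *\<^sub>v x) ` carrier_vec p"
  proof (intro equalityI subsetI)
    fix y assume "y \<in> (\<lambda>x. M *\<^sub>v x) ` carrier_vec p"
    then obtain x where x: "x \<in> carrier_vec p" "y = M *\<^sub>v x" by auto
    moreover have "vec p (\<lambda>i. x $ i) = x" using x by auto
    ultimately have "y = lincomb_list (\<lambda>i. x $ i) (cols M)" using lincomb by metis
    then show "y \<in> range (\<lambda>c. lincomb_list c (cols M))" by auto
  qed (auto simp: lincomb)
  finally show ?thesis .
qed

lemma kernel_dim_plus_rank:
  fixes M :: "'a::field mat"
  assumes M: "M \<in> carrier_mat m p"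
  shows "kernel_dim M + vec_space.rank m M = p"
proof -
  interpret VP: vec_space "TYPE('a)" p .
  interpret VM: vec_space "TYPE('a)" m .
  interpret L: linear_map class_ring "module_vec TYPE('a) p" "module_vec TYPE('a) m" "\<lambda>x. M *\<^sub>v x"
    by unfold_locales
      (use M in \<open>auto simp: LinearCombinations.module_hom_def module_vec_simps class_ring_simps
        mult_add_distrib_mat_vec mult_mat_vec\<close>)
  interpret K: kernel m p M by unfold_locales (rule M)
  have ker: "L.kerT = mat_kernel M"
    unfolding mod_hom.ker_def[OF L.mod_hom_axioms] mat_kernel_def using M by auto
  have im: "L.imT = VM.span (set (cols M))"
    unfolding mod_hom.im_def[OF L.mod_hom_axioms] VM.span_cols_eq_mult_image[OF M] by auto
  have "vectorspace.dim class_ring (VM.vs L.imT) + vectorspace.dim class_ring (VP.vs L.kerT) = VP.dim"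
    by (rule L.rank_nullity) simp
  then show ?thesis unfolding ker im VP.dim_is_n VM.rank_def K.kernel_dim[symmetric] by simp
qed

lemma (in vec_space) dim_span_mono:
  assumes S1: "S1 \<subseteq> carrier_vec n" and S2: "S2 \<subseteq> carrier_vec n"
    and f1: "finite S1" and f2: "finite S2" and sub: "span S1 \<subseteq> span S2"
  shows "vectorspace.dim class_ring (vs (span S1)) \<le> vectorspace.dim class_ring (vs (span S2))"
proof -
  have ss1: "subspace class_ring (span S1) V" and ss2: "subspace class_ring (span S2) V"
    using span_is_subspace S1 S2 by simp_all
  have fd1: "vectorspace.fin_dim class_ring ((vs (span S2))\<lparr>carrier := span S1\<rparr>)"
    using fin_dim_span[OF f1] S1 by simp
  show ?thesis
    using vectorspace.subspace_dim[OF subspace_is_vs[OF ss2] nested_subspaces[OF ss2 ss1 sub]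
        fin_dim_span[OF f2] fd1] S2
    by simp
qed

lemma rank_mult_le_left:
  fixes M :: "'a::field mat"
  assumes M: "M \<in> carrier_mat m r" and N: "N \<in> carrier_mat r p"
  shows "vec_space.rank m (M * N) \<le> vec_space.rank m M"
proof -
  interpret vec_space "TYPE('a)" m .
  have cols_MN: "set (cols (M * N)) \<subseteq> carrier_vec m" and cols_M: "set (cols M) \<subseteq> carrier_vec m"
    using M N cols_dim[of "M * N"] cols_dim[of M] by auto
  have "set (cols (M * N)) \<subseteq> span (set (cols M))"
  proof
    fix c assume "c \<in> set (cols (M * N))"
    then obtain j where j: "j < p" and "c = col (M * N) j" using N by (auto simp: cols_def)
    then have "c = M *\<^sub>v col N j" using col_mult2[OF M N j] by (simp only:)
    then show "c \<in> span (set (cols M))" using span_cols_eq_mult_image[OF M] N j by auto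
  qed
  then have "span (set (cols (M * N))) \<subseteq> span (set (cols M))"
    using span_subsetI[OF cols_M] by simp
  then show ?thesis unfolding rank_def using dim_span_mono[OF cols_MN cols_M] by simp
qed

lemma rank_factorization:
  fixes M :: "'a::field mat"
  assumes M: "M \<in> carrier_mat m p"
  obtains P Q where "P \<in> carrier_mat m (vec_space.rank m M)"
    and "Q \<in> carrier_mat (vec_space.rank m M) p" and "M = P * Q"
proof -
  interpret vec_space "TYPE('a)" m .
  define R where "R = span (set (cols M))"
  have cols_M: "set (cols M) \<subseteq> carrier_vec m" using M cols_dim by blast
  have R_subspace: "subspace class_ring R V" unfolding R_def using span_is_subspace cols_M by simp
  have R_vs: "vectorspace class_ring (vs R)" using subspace_is_vs[OF R_subspace] .
  obtain Bs where fin_Bs: "finite Bs" and basis_Bs: "vectorspace.basis class_ring (vs R) Bs"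
    using vectorspace.finite_basis_exists[OF R_vs] fin_dim_span_cols[OF M] unfolding R_def by blast
  have rank_M: "rank M = card Bs"
    unfolding rank_def using vectorspace.dim_basis[OF R_vs fin_Bs basis_Bs] unfolding R_def by simp
  have Bs_R: "Bs \<subseteq> R" and "LinearCombinations.module.span class_ring (vs R) Bs = R"
    using basis_Bs unfolding vectorspace.basis_def[OF R_vs] by auto
  then have span_Bs: "span Bs = R"
    using span_li_not_depend(1)[OF Bs_R] R_subspace unfolding subspace_def by simp
  obtain bs where set_bs: "set bs = Bs" and "distinct bs" using finite_distinct_list[OF fin_Bs] by blast
  then have len_bs: "length bs = rank M" using rank_M distinct_card by metis
  have bs_carrier: "set bs \<subseteq> carrier_vec m"
    using set_bs Bs_R span_is_subset2[OF cols_M] unfolding R_def by auto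
  define P where "P = mat_of_cols m bs"
  have P: "P \<in> carrier_mat m (rank M)" unfolding P_def len_bs[symmetric] by simp
  have span_P: "span (set (cols P)) = R"
    unfolding P_def cols_mat_of_cols[OF bs_carrier] set_bs span_Bs ..
  have "\<exists>q \<in> carrier_vec (rank M). col M j = P *\<^sub>v q" if "j < p" for j
  proof -
    have "col M j \<in> set (cols M)" using M that by (simp add: cols_def)
    then have "col M j \<in> R" unfolding R_def using in_own_span[OF cols_M] by blast
    then show ?thesis unfolding span_P[symmetric] span_cols_eq_mult_image[OF P] by auto
  qed
  then obtain q where q: "\<And>j. j < p \<Longrightarrow> q j \<in> carrier_vec (rank M) \<and> col M j = P *\<^sub>v q j"
    by metis
  define Q where "Q = mat (rank M) p (\<lambda>(i, j). q j $ i)"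
  have Q: "Q \<in> carrier_mat (rank M) p" unfolding Q_def by simp
  have "M = P * Q"
  proof (rule eq_matI)
    fix i j assume "i < dim_row (P * Q)" and "j < dim_col (P * Q)"
    then have i: "i < m" and j: "j < p" using P Q by auto
    have "col Q j = q j" using q[OF j] j unfolding Q_def by (intro eq_vecI) auto
    then have "(P * Q) $$ (i, j) = (P *\<^sub>v q j) $ i" using i j P Q by simp
    also have "\<dots> = col M j $ i" using q[OF j] by simp
    finally show "M $$ (i, j) = (P * Q) $$ (i, j)" using i j M by simp
  qed (use M P Q in auto)
  with P Q show ?thesis by (rule that)
qed

lemma rank_transpose_le:
  fixes M :: "'a::field mat"
  assumes M: "M \<in> carrier_mat m p"
  shows "vec_space.rank p (transpose_mat M) \<le> vec_space.rank m M"
proof -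
  obtain P Q where P: "P \<in> carrier_mat m (vec_space.rank m M)"
    and Q: "Q \<in> carrier_mat (vec_space.rank m M) p" and "M = P * Q"
    using rank_factorization[OF M] .
  then have "transpose_mat M = transpose_mat Q * transpose_mat P" using transpose_mult by blast
  then have "vec_space.rank p (transpose_mat M) \<le> vec_space.rank p (transpose_mat Q)"
    using rank_mult_le_left[of "transpose_mat Q" p _ "transpose_mat P" m] P Q by simp
  also have "\<dots> \<le> vec_space.rank m M" using vec_space.rank_le_nc[of "transpose_mat Q"] Q by simp
  finally show ?thesis .
qed

lemma rank_transpose:
  fixes M :: "'a::field mat"
  assumes M: "M \<in> carrier_mat m p"
  shows "vec_space.rank p (transpose_mat M) = vec_space.rank m M"
  using rank_transpose_le[OF M] rank_transpose_le[of "transpose_mat M" p m] M by fastforce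

section \<open>The kernel of the transposed reachability matrix\<close>

lemma pow_mat_Suc_left:
  fixes A :: "'a::semiring_1 mat"
  assumes "A \<in> carrier_mat n n"
  shows "A ^\<^sub>m Suc j = A * A ^\<^sub>m j"
  using assms by (induction j) (simp_all, metis assoc_mult_mat pow_carrier_mat)

lemma transpose_pow_mat:
  fixes A :: "'a::comm_semiring_1 mat"
  assumes A: "A \<in> carrier_mat n n"
  shows "transpose_mat (A ^\<^sub>m j) = transpose_mat A ^\<^sub>m j"
proof (induction j)
  case (Suc j)
  have "transpose_mat (A ^\<^sub>m Suc j) = transpose_mat (A ^\<^sub>m j) * transpose_mat A"
    using pow_mat_Suc_left[OF A] transpose_mult[OF A pow_carrier_mat[OF A]] by simp
  then show ?case using Suc by simp
qed (use A in auto)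

lemma reach_mat_carrier:
  assumes "A \<in> carrier_mat k k" and "B \<in> carrier_mat k m"
  shows "reach_mat A B \<in> carrier_mat k (k * m)"
  using assms unfolding reach_mat_def Let_def by auto

lemma all_less_mult_iff_div_mod:
  fixes m :: nat
  shows "(\<forall>i < k * m. P (i div m) (i mod m)) \<longleftrightarrow> (\<forall>j < k. \<forall>l < m. P j l)"
proof (intro iffI allI impI)
  fix j l assume P: "\<forall>i < k * m. P (i div m) (i mod m)" and j: "j < k" and l: "l < m"
  have "j * m + l < Suc j * m" using l by simp
  also have "\<dots> \<le> k * m" using j by (intro mult_right_mono) simp_all
  finally have "P ((j * m + l) div m) ((j * m + l) mod m)" using P by blast
  then show "P j l" using l by simp
next
  fix i assume P: "\<forall>j < k. \<forall>l < m. P j l" and i: "i < k * m"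
  then have "0 < m" by (cases m) simp_all
  then show "P (i div m) (i mod m)" using P i by (simp add: div_less_iff_less_mult)
qed

lemma col_reach_mat:
  assumes A: "A \<in> carrier_mat k k" and B: "B \<in> carrier_mat k m" and i: "i < k * m"
  shows "col (reach_mat A B) i = col (A ^\<^sub>m (i div m) * B) (i mod m)"
proof -
  have "0 < m" using i by (cases m) simp_all
  then show ?thesis using A B i reach_mat_carrier[OF A B] unfolding reach_mat_def Let_def
    by (intro eq_vecI) auto
qed

lemma mat_kernel_transpose_reach_mat:
  assumes A: "A \<in> carrier_mat k k" and B: "B \<in> carrier_mat k m"
  shows "mat_kernel (transpose_mat (reach_mat A B)) =
    {x \<in> carrier_vec k. \<forall>j < k. transpose_mat B *\<^sub>v (transpose_mat A ^\<^sub>m j *\<^sub>v x) = 0\<^sub>v m}"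
proof -
  have "transpose_mat B *\<^sub>v (transpose_mat A ^\<^sub>m j *\<^sub>v x) = transpose_mat (A ^\<^sub>m j * B) *\<^sub>v x"
    if "x \<in> carrier_vec k" for x j
    using that A B
    by (simp add: transpose_mult[of _ k k B m] transpose_pow_mat[OF A]
        assoc_mult_mat_vec[of "transpose_mat B" m k _ k])
  moreover have "transpose_mat (A ^\<^sub>m j * B) *\<^sub>v x = 0\<^sub>v m \<longleftrightarrow> (\<forall>l < m. col (A ^\<^sub>m j * B) l \<bullet> x = 0)"
    if "x \<in> carrier_vec k" for x j
    using that A B by (auto simp: vec_eq_iff)
  moreover have "transpose_mat (reach_mat A B) *\<^sub>v x = 0\<^sub>v (k * m) \<longleftrightarrow>
      (\<forall>i < k * m. col (A ^\<^sub>m (i div m) * B) (i mod m) \<bullet> x = 0)" for x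
    using reach_mat_carrier[OF A B] by (auto simp: vec_eq_iff col_reach_mat[OF A B, symmetric])
  then have "transpose_mat (reach_mat A B) *\<^sub>v x = 0\<^sub>v (k * m) \<longleftrightarrow>
      (\<forall>j < k. \<forall>l < m. col (A ^\<^sub>m j * B) l \<bullet> x = 0)" for x
    using all_less_mult_iff_div_mod[of k m "\<lambda>j l. col (A ^\<^sub>m j * B) l \<bullet> x = 0"] by simp
  ultimately show ?thesis using reach_mat_carrier[OF A B] unfolding mat_kernel_def by auto
qed

section \<open>The largest invariant subspace of a partially defined linear map\<close>

lemma (in vector_space) largest_invariant_subspace_eqI:
  assumes "subspace U" and "U \<subseteq> W" and "T ` U \<subseteq> U"
    and "\<And>U'. subspace U' \<Longrightarrow> U' \<subseteq> W \<Longrightarrow> T ` U' \<subseteq> U' \<Longrightarrow> U' \<subseteq> U"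
  shows "largest_invariant_subspace scale W T = U"
  unfolding largest_invariant_subspace_def
proof (rule the_equality)
  fix U'' assume "subspace U'' \<and> U'' \<subseteq> W \<and> T ` U'' \<subseteq> U'' \<and>
    (\<forall>U'. subspace U' \<and> U' \<subseteq> W \<and> T ` U' \<subseteq> U' \<longrightarrow> U' \<subseteq> U'')"
  then show "U'' = U" using assms by (intro subset_antisym) simp_all
qed (use assms in simp)

locale partial_endomorphism = vector_space scale
  for scale :: "'a::field \<Rightarrow> 'b::ab_group_add \<Rightarrow> 'b" +
  fixes W :: "'b set" and T :: "'b \<Rightarrow> 'b"
  assumes subspace_W: "subspace W"
    and linear_T: "linear_on_subspace scale W T"
begin

lemma T_add: "x \<in> W \<Longrightarrow> y \<in> W \<Longrightarrow> T (x + y) = T x + T y"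
  and T_scale: "x \<in> W \<Longrightarrow> T (scale c x) = scale c (T x)"
  using linear_T unfolding linear_on_subspace_def by simp_all

lemma T_zero: "T 0 = 0"
  using T_scale[of 0 0] subspace_0[OF subspace_W] by simp

lemma T_sum: "finite J \<Longrightarrow> (\<And>j. j \<in> J \<Longrightarrow> f j \<in> W) \<Longrightarrow> T (sum f J) = (\<Sum>j\<in>J. T (f j))"
proof (induction J rule: finite_induct)
  case (insert a J)
  have "sum f J \<in> W" by (intro subspace_sum[OF subspace_W] insert.prems) simp
  then show ?case using insert T_add[of "f a" "sum f J"] by simp
qed (simp add: T_zero)

definition iterated_preimage :: "nat \<Rightarrow> 'b set" where
  "iterated_preimage m = {w. \<forall>j \<le> m. (T ^^ j) w \<in> W}"

lemma iterated_preimage_0: "iterated_preimage 0 = W"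
  unfolding iterated_preimage_def by simp

lemma iterated_preimage_Suc: "iterated_preimage (Suc m) = {w \<in> W. T w \<in> iterated_preimage m}"
  unfolding iterated_preimage_def less_Suc_eq_le[symmetric] All_less_Suc2
  by (simp add: funpow_Suc_right del: funpow.simps)

lemma iterated_preimage_subset: "iterated_preimage m \<subseteq> W"
  unfolding iterated_preimage_def by force

lemma iterated_preimage_Suc_subset: "iterated_preimage (Suc m) \<subseteq> iterated_preimage m"
  unfolding iterated_preimage_def by auto

lemma subspace_iterated_preimage: "subspace (iterated_preimage m)"
proof (induction m)
  case (Suc m)
  show ?case unfolding iterated_preimage_Suc subspace_def
  proof (intro conjI ballI allI)
    show "0 \<in> {w \<in> W. T w \<in> iterated_preimage m}"
      using T_zero subspace_0[OF subspace_W] subspace_0[OF Suc] by simp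
  next
    fix x y assume "x \<in> {w \<in> W. T w \<in> iterated_preimage m}" "y \<in> {w \<in> W. T w \<in> iterated_preimage m}"
    then show "x + y \<in> {w \<in> W. T w \<in> iterated_preimage m}"
      using T_add subspace_add[OF subspace_W] subspace_add[OF Suc] by simp
  next
    fix c x assume "x \<in> {w \<in> W. T w \<in> iterated_preimage m}"
    then show "scale c x \<in> {w \<in> W. T w \<in> iterated_preimage m}"
      using T_scale subspace_scale[OF subspace_W] subspace_scale[OF Suc] by simp
  qed
qed (simp add: iterated_preimage_0 subspace_W)

lemma invariant_subset_iterated_preimage:
  assumes "U \<subseteq> W" and "T ` U \<subseteq> U"
  shows "U \<subseteq> iterated_preimage m"
proof (induction m)
  case (Suc m)
  then show ?case using assms unfolding iterated_preimage_Suc by blast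
qed (simp add: iterated_preimage_0 assms(1))

lemma iterated_preimage_stable:
  assumes "iterated_preimage (Suc m) = iterated_preimage m"
  shows "iterated_preimage (m + d) = iterated_preimage m"
proof (induction d)
  case (Suc d)
  then show ?case using assms iterated_preimage_Suc[of "m + d"] iterated_preimage_Suc[of m] by simp
qed simp

lemma largest_invariant_subspace_eq_iterated_preimage:
  assumes "iterated_preimage (Suc m) = iterated_preimage m"
  shows "largest_invariant_subspace scale W T = iterated_preimage m"
proof (rule largest_invariant_subspace_eqI)
  show "T ` iterated_preimage m \<subseteq> iterated_preimage m"
    using assms iterated_preimage_Suc[of m] by auto
qed (simp_all add: subspace_iterated_preimage iterated_preimage_subset invariant_subset_iterated_preimage)

text \<open>Each step of the chain before it stabilises lowers the dimension, so it stabilises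
  after at most \<open>dim W\<close> steps.\<close>

lemma largest_invariant_subspace_eq_iterated_preimage_dim:
  assumes "finite_dimensional_vector_space scale Basis"
  shows "largest_invariant_subspace scale W T = iterated_preimage (dim W)"
proof (rule largest_invariant_subspace_eq_iterated_preimage, rule ccontr)
  interpret finite_dimensional_vector_space scale Basis by (rule assms)
  assume unstable: "iterated_preimage (Suc (dim W)) \<noteq> iterated_preimage (dim W)"
  have strict: "iterated_preimage (Suc m) \<subset> iterated_preimage m" if "m \<le> dim W" for m
  proof -
    have "iterated_preimage (Suc m) \<noteq> iterated_preimage m"
    proof
      assume "iterated_preimage (Suc m) = iterated_preimage m"
      from iterated_preimage_stable[OF this, of "dim W - m"]
        iterated_preimage_stable[OF this, of "Suc (dim W) - m"]
      show False using unstable that by (simp add: Suc_diff_le)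
    qed
    then show ?thesis using iterated_preimage_Suc_subset by blast
  qed
  have "dim (iterated_preimage m) + m \<le> dim W" if "m \<le> Suc (dim W)" for m
    using that
  proof (induction m)
    case (Suc m)
    have "span (iterated_preimage (Suc m)) \<subset> span (iterated_preimage m)"
      using strict[of m] Suc.prems subspace_iterated_preimage by (simp add: span_eq_iff[THEN iffD2])
    then have "dim (iterated_preimage (Suc m)) < dim (iterated_preimage m)" by (rule dim_psubset)
    then show ?case using Suc by simp
  qed (simp add: iterated_preimage_0)
  from this[of "Suc (dim W)"] show False by simp
qed

end

section \<open>Coordinates with respect to the basis of V extending that of W\<close>

lemma sum_lessThan_add_split:
  fixes g :: "nat \<Rightarrow> 'c::comm_monoid_add"
  shows "(\<Sum>i < k + d. g i) = (\<Sum>i < k. g i) + (\<Sum>i < d. g (k + i))"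
  by (induction d) (simp_all add: add.assoc)

locale block_matrix_representation = vector_space scale
  for scale :: "'a::field \<Rightarrow> 'b::ab_group_add \<Rightarrow> 'b" +
  fixes n k :: nat and v :: "nat \<Rightarrow> 'b" and A B :: "'a mat" and T :: "'b \<Rightarrow> 'b"
  assumes k_le_n: "k \<le> n"
    and basis_inj: "inj_on v {..<n}"
    and basis_indep: "independent (v ` {..<n})"
    and basis_span: "span (v ` {..<n}) = UNIV"
    and A_carrier: "A \<in> carrier_mat k k"
    and B_carrier: "B \<in> carrier_mat k (n - k)"
    and T_linear: "linear_on_subspace scale (span (v ` {..<k})) T"
    and T_basis: "\<forall>j < k. T (v j) =
      (\<Sum>i < k. scale (A $$ (j, i)) (v i)) + (\<Sum>i < n - k. scale (B $$ (j, i)) (v (k + i)))"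
begin

abbreviation W :: "'b set" where "W \<equiv> span (v ` {..<k})"

sublocale partial_endomorphism scale W T
  by unfold_locales (simp_all add: T_linear)

lemma finite_dimensional: "finite_dimensional_vector_space scale (v ` {..<n})"
  by unfold_locales (use basis_indep basis_span in auto)

definition from_coords_W :: "'a vec \<Rightarrow> 'b" where
  "from_coords_W x = (\<Sum>j < k. scale (x $ j) (v j))"

definition from_coords_C :: "'a vec \<Rightarrow> 'b" where
  "from_coords_C y = (\<Sum>i < n - k. scale (y $ i) (v (k + i)))"

lemma basis_coeffs_eq_0:
  assumes "(\<Sum>i < n. scale (f i) (v i)) = 0" and "i < n"
  shows "f i = 0"
proof -
  have "(\<Sum>w \<in> v ` {..<n}. scale (f (inv_into {..<n} v w)) w) = 0"
    using assms(1) by (simp add: sum.reindex[OF basis_inj] inv_into_f_f[OF basis_inj])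
  from independentD[OF basis_indep finite_imageI[OF finite_lessThan] subset_refl this, of "v i"]
  show ?thesis using inv_into_f_f[OF basis_inj] assms(2) by simp
qed

lemma block_coeffs_eq_0:
  assumes "(\<Sum>i < k. scale (a i) (v i)) + (\<Sum>i < n - k. scale (b i) (v (k + i))) = 0"
  shows "\<forall>i < k. a i = 0" and "\<forall>i < n - k. b i = 0"
proof -
  define f where "f i = (if i < k then a i else b (i - k))" for i
  have "(\<Sum>i < n. scale (f i) (v i)) = 0"
    using assms sum_lessThan_add_split[of "\<lambda>i. scale (f i) (v i)" k "n - k"] k_le_n
    by (simp add: f_def)
  then have f_0: "f i = 0" if "i < n" for i using basis_coeffs_eq_0 that by blast
  show "\<forall>i < k. a i = 0"
  proof (intro allI impI)
    fix i assume "i < k"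
    then show "a i = 0" using f_0[of i] k_le_n by (simp add: f_def)
  qed
  show "\<forall>i < n - k. b i = 0"
  proof (intro allI impI)
    fix i assume "i < n - k"
    then show "b i = 0" using f_0[of "k + i"] by (simp add: f_def)
  qed
qed

lemma inj_on_basis_W: "inj_on v {..<k}"
  using inj_on_subset[OF basis_inj] k_le_n by simp

lemma from_coords_W_in_W: "from_coords_W x \<in> W"
  unfolding from_coords_W_def by (intro span_sum span_scale span_base) auto

lemma W_eq_from_coords_W_image: "W = from_coords_W ` carrier_vec k"
proof (intro equalityI subsetI)
  fix w assume "w \<in> W"
  then obtain u where "w = (\<Sum>y \<in> v ` {..<k}. scale (u y) y)"
    using span_finite[of "v ` {..<k}"] by auto
  also have "\<dots> = (\<Sum>i < k. scale (u (v i)) (v i))"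
    using sum.reindex[OF inj_on_basis_W] by simp
  also have "\<dots> = from_coords_W (vec k (\<lambda>i. u (v i)))"
    unfolding from_coords_W_def by simp
  finally show "w \<in> from_coords_W ` carrier_vec k" by (rule image_eqI[OF _ vec_carrier])
qed (use from_coords_W_in_W in blast)

lemma from_coords_W_diff: "from_coords_W x - from_coords_W y = (\<Sum>j < k. scale (x $ j - y $ j) (v j))"
  unfolding from_coords_W_def by (simp add: sum_subtractf scale_left_diff_distrib)

lemma inj_on_from_coords_W: "inj_on from_coords_W (carrier_vec k)"
proof
  fix x y assume x: "x \<in> carrier_vec k" and y: "y \<in> carrier_vec k"
    and "from_coords_W x = from_coords_W y"
  then have "(\<Sum>j < k. scale (x $ j - y $ j) (v j)) + (\<Sum>i < n - k. scale 0 (v (k + i))) = 0"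
    using from_coords_W_diff[of x y] by simp
  then have "\<forall>j < k. x $ j - y $ j = 0" by (rule block_coeffs_eq_0(1))
  then show "x = y" using x y by (intro eq_vecI) simp_all
qed

lemma from_coords_C_eq_0_if_in_W:
  assumes y: "y \<in> carrier_vec (n - k)" and "from_coords_W x + from_coords_C y \<in> W"
  shows "y = 0\<^sub>v (n - k)"
proof -
  obtain x' where "from_coords_W x + from_coords_C y = from_coords_W x'"
    using assms(2) W_eq_from_coords_W_image by auto
  then have "(from_coords_W x - from_coords_W x') + from_coords_C y = 0" by (simp add: algebra_simps)
  then have "(\<Sum>j < k. scale (x $ j - x' $ j) (v j)) + (\<Sum>i < n - k. scale (y $ i) (v (k + i))) = 0"
    unfolding from_coords_W_diff from_coords_C_def .
  then have "\<forall>i < n - k. y $ i = 0" by (rule block_coeffs_eq_0(2))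
  then show ?thesis using y by (intro eq_vecI) simp_all
qed

lemma T_from_coords_W:
  assumes x: "x \<in> carrier_vec k"
  shows "T (from_coords_W x) = from_coords_W (transpose_mat A *\<^sub>v x) + from_coords_C (transpose_mat B *\<^sub>v x)"
proof -
  have "T (from_coords_W x) = (\<Sum>j < k. T (scale (x $ j) (v j)))"
    unfolding from_coords_W_def by (rule T_sum) (auto intro: span_scale span_base)
  also have "\<dots> = (\<Sum>j < k. scale (x $ j) (T (v j)))"
    by (intro sum.cong refl T_scale span_base) auto
  also have "\<dots> = (\<Sum>j < k. \<Sum>i < k. scale (x $ j * A $$ (j, i)) (v i))
      + (\<Sum>j < k. \<Sum>i < n - k. scale (x $ j * B $$ (j, i)) (v (k + i)))"
    using T_basis by (simp add: scale_right_distrib scale_sum_right sum.distrib)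
  also have "\<dots> = (\<Sum>i < k. scale (\<Sum>j < k. x $ j * A $$ (j, i)) (v i))
      + (\<Sum>i < n - k. scale (\<Sum>j < k. x $ j * B $$ (j, i)) (v (k + i)))"
    by (subst (1 2) sum.swap) (simp add: scale_sum_left)
  also have "\<dots> = from_coords_W (transpose_mat A *\<^sub>v x) + from_coords_C (transpose_mat B *\<^sub>v x)"
    using x A_carrier B_carrier
    by (simp add: from_coords_W_def from_coords_C_def scalar_prod_def atLeast0LessThan mult.commute)
  finally show ?thesis .
qed

lemma from_coords_W_in_iterated_preimage_iff:
  assumes "x \<in> carrier_vec k"
  shows "from_coords_W x \<in> iterated_preimage m \<longleftrightarrow>
    (\<forall>j < m. transpose_mat B *\<^sub>v (transpose_mat A ^\<^sub>m j *\<^sub>v x) = 0\<^sub>v (n - k))"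
  using assms
proof (induction m arbitrary: x)
  case 0
  then show ?case by (simp add: iterated_preimage_0 from_coords_W_in_W)
next
  case (Suc m)
  have Ax: "transpose_mat A *\<^sub>v x \<in> carrier_vec k" and Bx: "transpose_mat B *\<^sub>v x \<in> carrier_vec (n - k)"
    using A_carrier B_carrier Suc.prems by auto
  have shift: "transpose_mat A ^\<^sub>m j *\<^sub>v (transpose_mat A *\<^sub>v x) = transpose_mat A ^\<^sub>m Suc j *\<^sub>v x" for j
    using A_carrier Suc.prems
    by (simp add: assoc_mult_mat_vec[of "transpose_mat A ^\<^sub>m j" k k "transpose_mat A" k x])
  have "from_coords_W x \<in> iterated_preimage (Suc m) \<longleftrightarrow>
      transpose_mat B *\<^sub>v x = 0\<^sub>v (n - k) \<and> from_coords_W (transpose_mat A *\<^sub>v x) \<in> iterated_preimage m"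
  proof (cases "transpose_mat B *\<^sub>v x = 0\<^sub>v (n - k)")
    case True
    then have "T (from_coords_W x) = from_coords_W (transpose_mat A *\<^sub>v x)"
      using T_from_coords_W[OF Suc.prems] by (simp add: from_coords_C_def)
    then show ?thesis using True by (simp add: iterated_preimage_Suc from_coords_W_in_W)
  next
    case False
    then have "T (from_coords_W x) \<notin> W"
      using T_from_coords_W[OF Suc.prems] from_coords_C_eq_0_if_in_W[OF Bx] by metis
    then show ?thesis using False iterated_preimage_subset by (auto simp: iterated_preimage_Suc)
  qed
  also have "\<dots> \<longleftrightarrow> (\<forall>j < Suc m. transpose_mat B *\<^sub>v (transpose_mat A ^\<^sub>m j *\<^sub>v x) = 0\<^sub>v (n - k))"
    unfolding Suc.IH[OF Ax] shift All_less_Suc2 using Suc.prems A_carrier by simp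
  finally show ?case .
qed

lemma dim_W: "dim W = k"
proof -
  have "independent (v ` {..<k})"
    using independent_mono[OF basis_indep] k_le_n by (simp add: image_mono)
  then have "dim W = card (v ` {..<k})" by (rule dim_span_eq_card_independent)
  also have "\<dots> = k" using card_image[OF inj_on_basis_W] by simp
  finally show ?thesis .
qed

sublocale coords: vec_space "TYPE('a)" k .

lemma from_coords_W_lincomb:
  assumes "finite X" and X: "X \<subseteq> carrier_vec k"
  shows "from_coords_W (coords.lincomb a X) = (\<Sum>b \<in> X. scale (a b) (from_coords_W b))"
proof -
  have "from_coords_W (coords.lincomb a X) = (\<Sum>j < k. scale (\<Sum>b \<in> X. a b * b $ j) (v j))"
    unfolding from_coords_W_def by (intro sum.cong refl) (simp add: coords.lincomb_index[OF _ X])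
  also have "\<dots> = (\<Sum>b \<in> X. \<Sum>j < k. scale (a b) (scale (b $ j) (v j)))"
    by (simp add: scale_sum_left sum.swap[of _ "{..<k}"])
  also have "\<dots> = (\<Sum>b \<in> X. scale (a b) (from_coords_W b))"
    unfolding from_coords_W_def by (simp add: scale_sum_right)
  finally show ?thesis .
qed

lemma independent_from_coords_W_image:
  assumes fin: "finite S" and S: "S \<subseteq> carrier_vec k" and indep: "\<not> coords.lin_dep S"
  shows "independent (from_coords_W ` S)"
proof
  assume "dependent (from_coords_W ` S)"
  then have "\<exists>u. (\<exists>w \<in> from_coords_W ` S. u w \<noteq> 0) \<and> (\<Sum>w \<in> from_coords_W ` S. scale (u w) w) = 0"
    using dependent_finite[OF finite_imageI[OF fin]] by blast
  then obtain u b0 where b0: "b0 \<in> S" "u (from_coords_W b0) \<noteq> 0"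
    and sum_0: "(\<Sum>w \<in> from_coords_W ` S. scale (u w) w) = 0"
    by blast
  define c where "c b = u (from_coords_W b)" for b
  have inj: "inj_on from_coords_W S" using inj_on_subset[OF inj_on_from_coords_W S] .
  have "from_coords_W (coords.lincomb c S) = from_coords_W (0\<^sub>v k)"
    using sum_0 from_coords_W_lincomb[OF fin S] unfolding sum.reindex[OF inj]
    by (simp add: c_def from_coords_W_def)
  moreover have "coords.lincomb c S \<in> carrier_vec k"
    using coords.lincomb_closed[of S c] S by simp
  ultimately have "coords.lincomb c S = 0\<^sub>v k"
    using inj_onD[OF inj_on_from_coords_W] by simp
  then have "coords.lin_dep S"
    using coords.lin_dep_crit[OF fin subset_refl _ b0(1), of c] b0(2) by (simp add: c_def)
  with indep show False ..
qed

lemma dim_from_coords_W_image_mat_kernel: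
  assumes M: "M \<in> carrier_mat N k"
  shows "dim (from_coords_W ` mat_kernel M) = kernel_dim M"
proof -
  interpret K: kernel N k M by unfold_locales (rule M)
  obtain Bs where fin: "finite Bs" and basis: "K.basis Bs" using kernel_basis_exists[OF M] by blast
  have Bs_ker: "Bs \<subseteq> mat_kernel M" and "\<not> K.Ker.lin_dep Bs" and "K.span Bs = mat_kernel M"
    using basis unfolding K.Ker.basis_def by auto
  then have span_Bs: "coords.span Bs = mat_kernel M" and indep_Bs: "\<not> coords.lin_dep Bs"
    using K.span_same[OF Bs_ker] K.lindep_same[OF Bs_ker] by simp_all
  have Bs_carrier: "Bs \<subseteq> carrier_vec k" using Bs_ker mat_kernel_carrier[OF M] by auto
  have "from_coords_W ` mat_kernel M \<subseteq> span (from_coords_W ` Bs)"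
  proof
    fix w assume "w \<in> from_coords_W ` mat_kernel M"
    then obtain x where x: "x \<in> coords.span Bs" and w: "w = from_coords_W x"
      unfolding span_Bs by blast
    obtain a X where "x = coords.lincomb a X" and X: "finite X" "X \<subseteq> Bs"
      using coords.in_spanE[OF x] by blast
    then have "w = (\<Sum>b \<in> X. scale (a b) (from_coords_W b))"
      using w from_coords_W_lincomb Bs_carrier by auto
    also have "\<dots> \<in> span (from_coords_W ` Bs)"
      using X(2) by (intro span_sum span_scale span_base) auto
    finally show "w \<in> span (from_coords_W ` Bs)" .
  qed
  then have "card (from_coords_W ` Bs) = dim (from_coords_W ` mat_kernel M)"
    using basis_card_eq_dim independent_from_coords_W_image[OF fin Bs_carrier indep_Bs] Bs_ker
    by (simp add: image_mono)
  then show ?thesis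
    using K.Ker.dim_basis[OF fin basis] card_image[OF inj_on_subset[OF inj_on_from_coords_W Bs_carrier]]
    by simp
qed

lemma largest_invariant_subspace_eq_from_coords_W_image:
  "largest_invariant_subspace scale W T = from_coords_W ` mat_kernel (transpose_mat (reach_mat A B))"
proof -
  have "largest_invariant_subspace scale W T = iterated_preimage k"
    using largest_invariant_subspace_eq_iterated_preimage_dim[OF finite_dimensional] dim_W by simp
  also have "\<dots> = from_coords_W ` {x \<in> carrier_vec k.
      \<forall>j < k. transpose_mat B *\<^sub>v (transpose_mat A ^\<^sub>m j *\<^sub>v x) = 0\<^sub>v (n - k)}"
  proof (intro equalityI subsetI)
    fix w assume w: "w \<in> iterated_preimage k"
    then obtain x where "x \<in> carrier_vec k" and "w = from_coords_W x"
      using iterated_preimage_subset W_eq_from_coords_W_image by blast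
    then show "w \<in> from_coords_W ` {x \<in> carrier_vec k.
        \<forall>j < k. transpose_mat B *\<^sub>v (transpose_mat A ^\<^sub>m j *\<^sub>v x) = 0\<^sub>v (n - k)}"
      using w from_coords_W_in_iterated_preimage_iff by blast
  qed (use from_coords_W_in_iterated_preimage_iff in blast)
  finally show ?thesis using mat_kernel_transpose_reach_mat[OF A_carrier B_carrier] by simp
qed

end

theorem corollary4:
  fixes scale :: "'a::{field,finite} \<Rightarrow> 'b::ab_group_add \<Rightarrow> 'b"
    and n k :: nat
    and v :: "nat \<Rightarrow> 'b"
    and A B :: "'a mat"
    and T :: "'b \<Rightarrow> 'b"
  assumes vs: "vector_space scale"
    and kpos: "0 < k" and kn: "k < n"
    and basis_inj: "inj_on v {..<n}"
    and basis_indep: "\<not> module.dependent scale (v ` {..<n})"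
    and basis_span: "module.span scale (v ` {..<n}) = UNIV"
    and A_dim: "A \<in> carrier_mat k k"
    and B_dim: "B \<in> carrier_mat k (n - k)"
    and T_lin: "linear_on_subspace scale (module.span scale (v ` {..<k})) T"
    and T_mat: "\<forall>j<k. T (v j) =
                   (\<Sum>i<k. scale (A $$ (j, i)) (v i)) + (\<Sum>i<n - k. scale (B $$ (j, i)) (v (k + i)))"
  shows "vec_space.rank k (reach_mat A B) =
           k - vector_space.dim scale
                 (largest_invariant_subspace scale (module.span scale (v ` {..<k})) T)"
proof -
  interpret block_matrix_representation scale n k v A B T
    using block_matrix_representation.intro[OF vs block_matrix_representation_axioms.intro,
        OF less_imp_le[OF kn] basis_inj basis_indep basis_span A_dim B_dim T_lin T_mat] .
  let ?C = "reach_mat A B"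
  have C: "?C \<in> carrier_mat k (k * (n - k))" using reach_mat_carrier[OF A_dim B_dim] .
  have "dim (largest_invariant_subspace scale W T) = kernel_dim (transpose_mat ?C)"
    unfolding largest_invariant_subspace_eq_from_coords_W_image
    using dim_from_coords_W_image_mat_kernel[of "transpose_mat ?C"] C by simp
  moreover have "kernel_dim (transpose_mat ?C) + vec_space.rank (k * (n - k)) (transpose_mat ?C) = k"
    using kernel_dim_plus_rank[of "transpose_mat ?C"] C by simp
  ultimately show ?thesis using rank_transpose[OF C] by simp
qed

end
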